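(* Let $H$ be a real Hilbert space, $I=\{1,\dots,M\}$, let $f_i,h_i,T_i$ ($i\in I$) satisfy Assumption (A1)–(A4) and the parameters satisfy Condition (C) (described below). Consider the sequences generated by the Distributed Accelerated Parallel Algorithm below, and assume that for each $i\in I$ the sequence $\{y^{(i)}_n\}$ is bounded. Then: (a) $\lim_{n\to\infty}\frac{\|x_{n+1}-x_n\|}{\lambda_n}=\lim_{n\to\infty}\|x_{n+1}-x_n\|=0$; (b) for every $\bar x\in S$ and $i\in I$ there exist constants $D_1,D_2\ge0$ such that for all $n$, $$\|w^{(i+1)}_n-\bar x\|^2\le\|x_n-\bar x\|^2+\theta_nD_1+2\lambda_n\big(f_i(\bar x)-f_i(y^{(i)}_n)\big)+2\lambda_n\langle d^{(i)}_{n+1},y^{(i)}_n-\bar x\rangle+\alpha_nD_2-(1-\alpha_n)\|T_i(y^{(i)}_n)-y^{(i)}_n\|^2-\|z_n-y^{(i)}_n\|^2.$$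
   Context: Assumption (A1): each $f_i:H\to\mathbb{R}$ is continuous and convex. (A2): each $h_i:H\to\mathbb{R}$ is convex and Fréchet differentiable, and $\nabla h_i$ is $(1/L_i)$-Lipschitz continuous for some $L_i>0$. (A3): each $T_i:H\to H$ is firmly nonexpansive, i.e. $\|T_ix-T_iy\|^2\le\langle T_ix-T_iy,x-y\rangle$ for all $x,y$. (A4): $S=\bigcap_{i=1}^M\mathrm{Fix}\,T_i\neq\emptyset$ and, with $\psi=\sum_{i=1}^M(f_i+h_i)$, $\Omega=\{\hat x\in S:\psi(\hat x)=\min_{x\in S}\psi(x)\}\neq\emptyset$. Condition (C): $\{\theta_n\},\{\lambda_n\},\{\beta_n\},\{\alpha_n\}$ are decreasing real sequences converging to $0$ with $\theta_n\in[0,1)$, $\lambda_n\in(0,2\min_{i\in I}L_i]$, $\beta_n\in(0,1]$, $\alpha_n\in(0,1]$, and: (C1) $\sum_n\alpha_n=\infty$; (C2) $\lim_n\frac{1}{\alpha_{n+1}}\big|\frac{1}{\lambda_{n+1}}-\frac{1}{\lambda_n}\big|=0$; (C3) $\lim_n\frac{1}{\lambda_{n+1}}\big|1-\frac{\alpha_n}{\alpha_{n+1}}\big|=0$; (C4) $\lim_n\frac{\alpha_n}{\lambda_n}=0$; (C5) $\lim_n\frac{\theta_n}{\alpha_{n+1}\lambda_{n+1}}=0$; (C6) $\frac{\lambda_n}{\lambda_{n+1}}\le\sigma$ for some $\sigma\ge1$; (C7) $\lim_n\frac{\beta_n}{\alpha_{n+1}}=0$. $\mathrm{prox}_{\lambda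 g}(x)=\arg\min_y\{g(y)+\frac{1}{2\lambda}\|x-y\|^2\}$. Distributed Accelerated Parallel Algorithm: choose $z_0,x_0,x_1\in H$, $u^{(i)}\in H$ and set $d^{(i)}_1=-\nabla h_i(z_0)$ ($i\in I$). For $n=1,2,\dots$: compute $z_n=x_n+\theta_n(x_n-x_{n-1})$; for $i=1,\dots,M$ compute $d^{(i)}_{n+1}=-\nabla h_i(z_n)+\beta_nd^{(i)}_n$, $y^{(i)}_n=\mathrm{prox}_{\lambda_nf_i}(z_n+\lambda_nd^{(i)}_{n+1})$, $w^{(i+1)}_n=\alpha_nu^{(i)}+(1-\alpha_n)T_i(y^{(i)}_n)$; then set $x_{n+1}=\frac1M\sum_{i=1}^Mw^{(i+1)}_n$. *)

theory Defs
  imports "HOL-Analysis.Analysis"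
begin

definition prox :: "real \<Rightarrow> ('a::real_normed_vector \<Rightarrow> real) \<Rightarrow> 'a \<Rightarrow> 'a" where
  "prox lam g x = (SOME p. \<forall>y. g p + (1 / (2 * lam)) * (norm (x - p))\<^sup>2
                                  \<le> g y + (1 / (2 * lam)) * (norm (x - y))\<^sup>2)"

definition firmly_nonexpansive :: "('a::real_inner \<Rightarrow> 'a) \<Rightarrow> bool" where
  "firmly_nonexpansive T \<longleftrightarrow>
     (\<forall>x y. (norm (T x - T y))\<^sup>2 \<le> inner (T x - T y) (x - y))"

end

(*
  Part (a): averaging over i, one step of the algorithm changes |x_(n+1) - x_n| by the
  contraction factor 1 - alpha_(n+1) up to perturbations.  The forward step
  I - lambda grad h_i is nonexpansive for lambda <= 2 L_i (Baillon--Haddad), the proximal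
  point depends Lipschitz-continuously on its argument and on the step size, T_i is
  nonexpansive, and all iterates stay bounded because the y-sequences are.  After division
  by lambda_(n+1), conditions (C2), (C3), (C5)-(C7) make the perturbations o(alpha_(n+1)),
  and Xu's lemma with (C1) gives |x_(n+1) - x_n| / lambda_n -> 0.

  Part (b) is a one-step estimate: convexity of the squared norm, firm nonexpansiveness of
  T_i at the fixed point, the variational inequality of the proximal point, and the bound on
  the iterates to absorb the inertial term.
*)
theory Submission
  imports Defs
begin

section \<open>Convex functions with Lipschitz gradient\<close>

context
  fixes h :: "'a::real_inner \<Rightarrow> real" and G :: "'a \<Rightarrow> 'a"
  assumes gradient: "\<And>v. (h has_derivative (\<lambda>e. inner (G v) e)) (at v)"
begin

lemma has_real_derivative_along_line:
  "((\<lambda>t. h (x + t *\<^sub>R v)) has_real_derivative inner (G (x + t *\<^sub>R v)) v) (at t)"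
proof -
  have "((\<lambda>t. x + t *\<^sub>R v) has_derivative (\<lambda>s. s *\<^sub>R v)) (at t)"
    by (auto intro!: derivative_eq_intros)
  from has_derivative_compose[OF this gradient]
  have "((\<lambda>t. h (x + t *\<^sub>R v)) has_derivative (\<lambda>s. s * inner (G (x + t *\<^sub>R v)) v)) (at t)"
    by (simp add: o_def)
  then show ?thesis
    unfolding has_field_derivative_def
    by (rule has_derivative_eq_rhs) (simp add: fun_eq_iff mult.commute)
qed

lemma convex_gradient_ineq:
  assumes "convex_on UNIV h"
  shows "h x + inner (G x) (y - x) \<le> h y"
proof -
  let ?p = "\<lambda>t. h (x + t *\<^sub>R (y - x))"
  have "convex_on UNIV ?p"
  proof (rule convex_onI)
    fix t a b :: real assume "0 < t" "t < 1"
    moreover have "x + ((1 - t) * a + t * b) *\<^sub>R (y - x)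
        = (1 - t) *\<^sub>R (x + a *\<^sub>R (y - x)) + t *\<^sub>R (x + b *\<^sub>R (y - x))"
      by (simp add: algebra_simps)
    ultimately show "?p ((1 - t) *\<^sub>R a + t *\<^sub>R b) \<le> (1 - t) * ?p a + t * ?p b"
      using convex_onD[OF assms, of t "x + a *\<^sub>R (y - x)" "x + b *\<^sub>R (y - x)"] by simp
  qed auto
  then have "inner (G (x + 0 *\<^sub>R (y - x))) (y - x) * (1 - 0) \<le> ?p 1 - ?p 0"
    by (rule convex_on_imp_above_tangent)
      (use has_real_derivative_along_line[of x "y - x" 0] in auto)
  then show ?thesis by simp
qed

lemma descent_lemma:
  assumes L: "L > 0" and lip: "\<And>v v'. norm (G v - G v') \<le> (1 / L) * norm (v - v')"
  shows "h y \<le> h x + inner (G x) (y - x) + (norm (y - x))\<^sup>2 / (2 * L)"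
proof -
  let ?v = "y - x"
  let ?p = "\<lambda>t. h (x + t *\<^sub>R ?v) - t * inner (G x) ?v - t\<^sup>2 * (norm ?v)\<^sup>2 / (2 * L)"
  have "?p 1 \<le> ?p 0"
  proof (rule DERIV_nonpos_imp_nonincreasing[where f = ?p])
    fix t :: real assume t: "0 \<le> t" "t \<le> 1"
    have "(?p has_real_derivative
            inner (G (x + t *\<^sub>R ?v)) ?v - inner (G x) ?v - t * (norm ?v)\<^sup>2 / L) (at t)"
      using has_real_derivative_along_line[of x ?v t] L
      by (auto intro!: derivative_eq_intros simp: field_simps power2_eq_square)
    moreover have "inner (G (x + t *\<^sub>R ?v)) ?v - inner (G x) ?v \<le> t * (norm ?v)\<^sup>2 / L"
    proof -
      have "inner (G (x + t *\<^sub>R ?v)) ?v - inner (G x) ?v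
          \<le> norm (G (x + t *\<^sub>R ?v) - G x) * norm ?v"
        by (metis inner_diff_left norm_cauchy_schwarz)
      also have "\<dots> \<le> (1 / L) * norm (t *\<^sub>R ?v) * norm ?v"
        using lip[of "x + t *\<^sub>R ?v" x] by (intro mult_right_mono) auto
      finally show ?thesis
        using t by (simp add: power2_eq_square)
    qed
    ultimately show "\<exists>y. (?p has_real_derivative y) (at t) \<and> y \<le> 0"
      by force
  qed simp
  then show ?thesis
    by (simp add: inner_commute)
qed

text \<open>Applying the gradient inequality at the point \<open>y - L (G y - G x)\<close> and the descent
  lemma between \<open>y\<close> and that point.\<close>
lemma convex_Lipschitz_gradient_lower_bound:
  assumes cv: "convex_on UNIV h"
    and L: "L > 0" and lip: "\<And>v v'. norm (G v - G v') \<le> (1 / L) * norm (v - v')"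
  shows "h x + inner (G x) (y - x) + L / 2 * (norm (G y - G x))\<^sup>2 \<le> h y"
proof -
  define g where "g = G y - G x"
  define p where "p = y - L *\<^sub>R g"
  have "h x + inner (G x) (p - x) \<le> h p"
    by (rule convex_gradient_ineq[OF cv])
  moreover have "h p \<le> h y + inner (G y) (p - y) + (norm (p - y))\<^sup>2 / (2 * L)"
    by (rule descent_lemma[OF L lip])
  moreover have "inner (G x) (p - x) = inner (G x) (y - x) - L * inner (G x) g"
    unfolding p_def by (simp add: inner_diff_right algebra_simps)
  moreover have "inner (G y) (p - y) = - L * inner (G y) g"
    unfolding p_def by (simp add: inner_diff_right algebra_simps)
  moreover have "(norm (p - y))\<^sup>2 / (2 * L) = L / 2 * (norm g)\<^sup>2"
    unfolding p_def using L by (simp add: power2_eq_square field_simps)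
  moreover have "L * (inner (G y) g - inner (G x) g) = L * (norm g)\<^sup>2"
    by (simp add: g_def inner_diff_left power2_norm_eq_inner)
  ultimately show ?thesis
    unfolding g_def[symmetric] by (simp add: algebra_simps)
qed

lemma gradient_cocoercive:
  assumes "convex_on UNIV h"
    and "L > 0" and "\<And>v v'. norm (G v - G v') \<le> (1 / L) * norm (v - v')"
  shows "L * (norm (G x - G y))\<^sup>2 \<le> inner (G x - G y) (x - y)"
proof -
  have "inner (G x - G y) (x - y) = - (inner (G x) (y - x) + inner (G y) (x - y))"
    by (simp add: inner_diff_left inner_diff_right)
  then show ?thesis
    using convex_Lipschitz_gradient_lower_bound[OF assms, of x y]
      convex_Lipschitz_gradient_lower_bound[OF assms, of y x]
    by (simp add: norm_minus_commute field_simps)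
qed

lemma gradient_step_nonexpansive:
  assumes cv: "convex_on UNIV h"
    and L: "L > 0" and lip: "\<And>v v'. norm (G v - G v') \<le> (1 / L) * norm (v - v')"
    and lam: "0 \<le> lam" "lam \<le> 2 * L"
  shows "norm ((x - lam *\<^sub>R G x) - (y - lam *\<^sub>R G y)) \<le> norm (x - y)"
proof -
  define g where "g = G x - G y"
  have "(norm ((x - lam *\<^sub>R G x) - (y - lam *\<^sub>R G y)))\<^sup>2 = (norm ((x - y) - lam *\<^sub>R g))\<^sup>2"
    by (simp add: g_def algebra_simps)
  also have "\<dots> = (norm (x - y))\<^sup>2 - 2 * lam * inner g (x - y) + lam\<^sup>2 * (norm g)\<^sup>2"
    unfolding power2_norm_eq_inner
    by (simp add: inner_diff_left inner_diff_right inner_commute power2_eq_square algebra_simps)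
  also have "\<dots> \<le> (norm (x - y))\<^sup>2 - lam * (2 * L - lam) * (norm g)\<^sup>2"
  proof -
    have "2 * lam * (L * (norm g)\<^sup>2) \<le> 2 * lam * inner g (x - y)"
      using gradient_cocoercive[OF cv L lip, of x y] lam unfolding g_def
      by (intro mult_left_mono) auto
    then show ?thesis
      by (simp add: algebra_simps power2_eq_square)
  qed
  also have "\<dots> \<le> (norm (x - y))\<^sup>2"
    using lam by simp
  finally show ?thesis
    using power2_le_imp_le by force
qed

end

section \<open>Firmly nonexpansive maps and the proximal operator\<close>

lemma firmly_nonexpansive_imp_nonexpansive:
  assumes "firmly_nonexpansive T"
  shows "norm (T a - T b) \<le> norm (a - b)"
proof -
  have "(norm (T a - T b))\<^sup>2 \<le> norm (T a - T b) * norm (a - b)"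
    using assms norm_cauchy_schwarz[of "T a - T b" "a - b"]
    unfolding firmly_nonexpansive_def by (meson order_trans)
  then show ?thesis
    by (cases "T a = T b") (auto simp: power2_eq_square)
qed

lemma firmly_nonexpansive_fixed_point_ineq:
  assumes "firmly_nonexpansive T" and "T p = p"
  shows "(norm (T v - p))\<^sup>2 \<le> (norm (v - p))\<^sup>2 - (norm (T v - v))\<^sup>2"
proof -
  have "(norm (T v - p))\<^sup>2 \<le> inner (T v - p) (v - p)"
    using assms unfolding firmly_nonexpansive_def by metis
  moreover have "T v - v = (T v - p) - (v - p)"
    by simp
  then have "(norm (T v - v))\<^sup>2 = (norm (T v - p))\<^sup>2 - 2 * inner (T v - p) (v - p) + (norm (v - p))\<^sup>2"
    unfolding power2_norm_eq_inner by (simp add: inner_diff_left inner_diff_right inner_commute)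
  ultimately show ?thesis
    by linarith
qed

text \<open>Continuity bounds \<open>g\<close> below by \<open>g x - 1\<close> on a ball of radius \<open>r\<close>; convexity along the
  segment from \<open>x\<close> to a far point carries this outwards with slope \<open>2 / r\<close>.\<close>
lemma continuous_convex_cone_minorant:
  fixes g :: "'a::real_normed_vector \<Rightarrow> real"
  assumes ct: "continuous_on UNIV g" and cv: "convex_on UNIV g"
  obtains k where "\<And>y. g x - 1 - k * norm (y - x) \<le> g y"
proof -
  obtain r where r: "r > 0" and "\<And>y. dist y x < r \<Longrightarrow> dist (g y) (g x) < 1"
    using ct unfolding continuous_on_eq_continuous_at[OF open_UNIV] continuous_at_eps_delta
    by (meson zero_less_one UNIV_I)
  then have near: "\<And>y. norm (y - x) < r \<Longrightarrow> g x - 1 < g y"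
    by (force simp: dist_norm dist_real_def abs_less_iff)
  have "g x - 1 - (2 / r) * norm (y - x) \<le> g y" for y
  proof (cases "norm (y - x) < r")
    case True
    then show ?thesis
      using near[of y] r by (smt (verit) divide_nonneg_nonneg norm_ge_zero mult_nonneg_nonneg)
  next
    case False
    define s where "s = norm (y - x)"
    have s: "r \<le> s"
      using False by (simp add: s_def)
    define t where "t = r / (2 * s)"
    have t: "0 < t" "t \<le> 1"
      using s r by (auto simp: t_def field_simps)
    have "((1 - t) *\<^sub>R x + t *\<^sub>R y) - x = t *\<^sub>R (y - x)"
      by (simp add: algebra_simps)
    then have "norm (((1 - t) *\<^sub>R x + t *\<^sub>R y) - x) = r / 2"
      using t s r by (simp add: s_def[symmetric] t_def)
    then have "g x - 1 < g ((1 - t) *\<^sub>R x + t *\<^sub>R y)"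
      using near r by simp
    also have "\<dots> \<le> (1 - t) * g x + t * g y"
      using convex_onD[OF cv, of t x y] t by simp
    finally have "g x - 1 / t < g y"
      using t by (simp add: field_simps)
    moreover have "1 / t = (2 / r) * s"
      using s r by (simp add: t_def)
    ultimately show ?thesis
      by (simp add: s_def)
  qed
  then show ?thesis
    by (rule that)
qed

context
  fixes g :: "'a::{real_inner, complete_space} \<Rightarrow> real"
  assumes ct: "continuous_on UNIV g" and cv: "convex_on UNIV g"
begin

lemma prox_objective_midpoint_ineq:
  "g ((1 / 2) *\<^sub>R (a + b)) + c * (norm (x - (1 / 2) *\<^sub>R (a + b)))\<^sup>2
    \<le> ((g a + c * (norm (x - a))\<^sup>2) + (g b + c * (norm (x - b))\<^sup>2)) / 2 - c / 4 * (norm (a - b))\<^sup>2"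
proof -
  have "g ((1 - 1 / 2) *\<^sub>R a + (1 / 2) *\<^sub>R b) \<le> (1 - 1 / 2) * g a + (1 / 2) * g b"
    by (rule convex_onD[OF cv]) auto
  then have "g ((1 / 2) *\<^sub>R (a + b)) \<le> (g a + g b) / 2"
    by (simp add: scaleR_add_right)
  moreover have E: "(norm (x - (1 / 2) *\<^sub>R (a + b)))\<^sup>2
      = ((norm (x - a))\<^sup>2 + (norm (x - b))\<^sup>2) / 2 - (norm (a - b))\<^sup>2 / 4"
    unfolding power2_norm_eq_inner
    by (simp add: inner_diff_left inner_diff_right inner_add_left inner_add_right
        inner_commute algebra_simps; simp add: field_simps)
  moreover have "c * (norm (x - (1 / 2) *\<^sub>R (a + b)))\<^sup>2
      = (c * (norm (x - a))\<^sup>2 + c * (norm (x - b))\<^sup>2) / 2 - c / 4 * (norm (a - b))\<^sup>2"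
    unfolding E by (simp add: field_simps)
  ultimately show ?thesis
    by argo
qed

lemma prox_objective_bdd_below:
  assumes c: "c > 0"
  shows "bdd_below (range (\<lambda>y. g y + c * (norm (x - y))\<^sup>2))"
proof -
  obtain k where k: "\<And>y. g x - 1 - k * norm (y - x) \<le> g y"
    using continuous_convex_cone_minorant[OF ct cv] by blast
  have "g x - 1 - k\<^sup>2 / (4 * c) \<le> g y + c * (norm (x - y))\<^sup>2" for y
  proof -
    define s where "s = norm (x - y)"
    have "g x - 1 - k * s \<le> g y"
      using k[of y] by (simp add: s_def norm_minus_commute)
    moreover have "c * s\<^sup>2 - k * s + k\<^sup>2 / (4 * c) = (2 * c * s - k)\<^sup>2 / (4 * c)"
      using c by (simp add: field_simps power2_eq_square)
    moreover have "0 \<le> (2 * c * s - k)\<^sup>2 / (4 * c)"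
      using c by simp
    ultimately show ?thesis
      unfolding s_def[symmetric] by linarith
  qed
  then show ?thesis
    by (rule bdd_belowI2)
qed

text \<open>The prox objective is strongly convex, so minimizing sequences are Cauchy.\<close>
lemma prox_objective_minimizing_seq_Cauchy:
  assumes c: "c > 0" and lower: "\<And>y. m \<le> g y + c * (norm (x - y))\<^sup>2"
    and lim: "(\<lambda>n. g (Y n) + c * (norm (x - Y n))\<^sup>2) \<longlonglongrightarrow> m"
  shows "Cauchy Y"
proof (rule metric_CauchyI)
  fix e :: real assume e: "e > 0"
  then have "\<forall>\<^sub>F n in sequentially. g (Y n) + c * (norm (x - Y n))\<^sup>2 < m + c / 4 * e\<^sup>2"
    using c lim by (intro order_tendstoD(2)) auto
  then obtain N where N: "\<And>n. n \<ge> N \<Longrightarrow> g (Y n) + c * (norm (x - Y n))\<^sup>2 < m + c / 4 * e\<^sup>2"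
    unfolding eventually_sequentially by blast
  have "dist (Y n) (Y k) < e" if "n \<ge> N" "k \<ge> N" for n k
  proof -
    have "c / 4 * (norm (Y n - Y k))\<^sup>2 < c / 4 * e\<^sup>2"
      using lower[of "(1 / 2) *\<^sub>R (Y n + Y k)"] N[OF that(1)] N[OF that(2)]
        prox_objective_midpoint_ineq[where a = "Y n" and b = "Y k" and c = c and x = x]
      by argo
    then have "(norm (Y n - Y k))\<^sup>2 < e\<^sup>2"
      using c by simp
    then show ?thesis
      using e power2_less_imp_less[of "norm (Y n - Y k)" e] by (simp add: dist_norm)
  qed
  then show "\<exists>N. \<forall>n\<ge>N. \<forall>k\<ge>N. dist (Y n) (Y k) < e"
    by blast
qed

lemma prox_objective_has_minimizer:
  assumes lam: "lam > 0"
  shows "\<exists>p. \<forall>y. g p + (1 / (2 * lam)) * (norm (x - p))\<^sup>2 \<le> g y + (1 / (2 * lam)) * (norm (x - y))\<^sup>2"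
proof -
  define c where "c = 1 / (2 * lam)"
  have c: "c > 0"
    using lam by (simp add: c_def)
  define F where "F = (\<lambda>y. g y + c * (norm (x - y))\<^sup>2)"
  define m where "m = Inf (range F)"
  have bdd: "bdd_below (range F)"
    unfolding F_def using c by (rule prox_objective_bdd_below)
  then have m_le: "m \<le> F y" for y
    unfolding m_def by (simp add: cInf_lower)
  have "m \<in> closure (range F)"
    unfolding m_def using bdd by (intro closure_contains_Inf) auto
  then obtain s where s: "\<And>n. s n \<in> range F" and "s \<longlonglongrightarrow> m"
    unfolding closure_sequential by blast
  from s have "\<forall>n. \<exists>y. s n = F y"
    by blast
  then obtain Y where "\<And>n. s n = F (Y n)"
    by metis
  then have FY: "(\<lambda>n. F (Y n)) \<longlonglongrightarrow> m"
    using \<open>s \<longlonglongrightarrow> m\<close> by (metis ext)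
  have "Cauchy Y"
    using c m_le FY unfolding F_def by (rule prox_objective_minimizing_seq_Cauchy)
  then obtain p where p: "Y \<longlonglongrightarrow> p"
    using Cauchy_convergent_iff convergent_def by blast
  have "continuous_on UNIV F"
    unfolding F_def by (intro continuous_intros ct)
  from continuous_on_tendsto_compose[OF this p] have "(\<lambda>n. F (Y n)) \<longlonglongrightarrow> F p"
    by simp
  then have "F p = m"
    using FY LIMSEQ_unique by blast
  then show ?thesis
    using m_le unfolding F_def c_def by blast
qed

lemma prox_minimizes:
  assumes "lam > 0"
  shows "g (prox lam g x) + (1 / (2 * lam)) * (norm (x - prox lam g x))\<^sup>2
    \<le> g y + (1 / (2 * lam)) * (norm (x - y))\<^sup>2"
  using someI_ex[OF prox_objective_has_minimizer[OF assms, of x]] unfolding prox_def by blast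

text \<open>Compare \<open>p\<close> with the points \<open>p + t (v - p)\<close> of the prox objective and let \<open>t \<rightarrow> 0\<close>.\<close>
lemma prox_variational_ineq:
  assumes lam: "lam > 0" and p: "p = prox lam g x"
  shows "inner (x - p) (v - p) \<le> lam * (g v - g p)"
proof -
  define c where "c = 1 / (2 * lam)"
  have c: "c > 0"
    using lam by (simp add: c_def)
  have small: "g p - g v + 2 * c * inner (x - p) (v - p) \<le> t * (c * (norm (v - p))\<^sup>2)"
    if t: "0 < t" "t < 1" for t
  proof -
    define q where "q = (1 - t) *\<^sub>R p + t *\<^sub>R v"
    define I where "I = inner (x - p) (v - p)"
    define N where "N = (norm (v - p))\<^sup>2"
    have xq: "x - q = (x - p) - t *\<^sub>R (v - p)"
      by (simp add: q_def algebra_simps)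
    have nq: "(norm (x - q))\<^sup>2 = (norm (x - p))\<^sup>2 - 2 * t * I + t\<^sup>2 * N"
      unfolding xq I_def N_def power2_norm_eq_inner
      by (simp add: inner_diff_left inner_diff_right inner_commute power2_eq_square algebra_simps)
    have "c * (norm (x - q))\<^sup>2 = c * (norm (x - p))\<^sup>2 - 2 * t * (c * I) + t\<^sup>2 * (c * N)"
      unfolding nq by (simp add: algebra_simps)
    moreover have "g p + c * (norm (x - p))\<^sup>2 \<le> g q + c * (norm (x - q))\<^sup>2"
      using prox_minimizes[OF lam, of x q] unfolding p[symmetric] c_def .
    moreover have "g q \<le> (1 - t) * g p + t * g v"
      unfolding q_def using t by (intro convex_onD[OF cv]) auto
    ultimately have "t * (g p - g v + 2 * c * I) \<le> t * (t * (c * N))"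
      by (simp add: algebra_simps power2_eq_square)
    then show ?thesis
      using t unfolding I_def N_def by simp
  qed
  have "\<forall>\<^sub>F t in at_right 0. g p - g v + 2 * c * inner (x - p) (v - p) \<le> t * (c * (norm (v - p))\<^sup>2)"
    using eventually_at_right_real[OF zero_less_one] by (rule eventually_mono) (simp add: small)
  moreover have "((\<lambda>t. t * (c * (norm (v - p))\<^sup>2)) \<longlongrightarrow> 0) (at_right 0)"
    by (intro tendsto_eq_intros) auto
  ultimately have "g p - g v + 2 * c * inner (x - p) (v - p) \<le> 0"
    by (intro tendsto_lowerbound[OF _ _ trivial_limit_at_right_real]) (auto elim: eventually_mono)
  then show ?thesis
    using lam by (simp add: c_def field_simps)
qed

text \<open>Adding the variational inequalities of both prox points, weighted by the other step size.\<close>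
lemma norm_prox_diff_le:
  assumes lam: "lam > 0" and mu: "mu > 0"
  shows "norm (prox lam g a - prox mu g b)
    \<le> norm (a - b) + \<bar>mu - lam\<bar> / lam * norm (a - prox lam g a)"
proof -
  define p where "p = prox lam g a"
  define q where "q = prox mu g b"
  have "mu * inner (a - p) (q - p) \<le> mu * (lam * (g q - g p))"
    using prox_variational_ineq[OF lam p_def] mu by (intro mult_left_mono) auto
  moreover have "lam * inner (b - q) (p - q) \<le> lam * (mu * (g p - g q))"
    using prox_variational_ineq[OF mu q_def] lam by (intro mult_left_mono) auto
  ultimately have "mu * inner (a - p) (q - p) + lam * inner (b - q) (p - q) \<le> 0"
    by (simp add: algebra_simps)
  define r where "r = lam *\<^sub>R (a - b) + (mu - lam) *\<^sub>R (a - p)"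
  have "mu * inner (a - p) (q - p) + lam * inner (b - q) (p - q)
      = lam * (norm (p - q))\<^sup>2 - inner r (p - q)"
    unfolding r_def power2_norm_eq_inner
    by (simp add: inner_diff_left inner_diff_right inner_add_left inner_commute algebra_simps)
  then have "lam * (norm (p - q))\<^sup>2 \<le> inner r (p - q)"
    using \<open>mu * inner (a - p) (q - p) + lam * inner (b - q) (p - q) \<le> 0\<close> by linarith
  also have "\<dots> \<le> norm r * norm (p - q)"
    by (rule norm_cauchy_schwarz)
  also have "\<dots> \<le> (lam * norm (a - b) + \<bar>mu - lam\<bar> * norm (a - p)) * norm (p - q)"
  proof (rule mult_right_mono)
    show "norm r \<le> lam * norm (a - b) + \<bar>mu - lam\<bar> * norm (a - p)"
      unfolding r_def using lam by (metis abs_of_pos norm_scaleR norm_triangle_ineq)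
  qed simp
  finally have "lam * norm (p - q) \<le> lam * norm (a - b) + \<bar>mu - lam\<bar> * norm (a - p)"
    using lam by (cases "p = q") (auto simp: power2_eq_square mult.assoc[symmetric])
  then show ?thesis
    unfolding p_def[symmetric] q_def[symmetric] using lam by (simp add: field_simps)
qed

end

section \<open>Norm estimates and real sequences\<close>

lemma bounded_family_norm_le:
  assumes "finite I" and "\<And>i. i \<in> I \<Longrightarrow> bounded (F i ` N)"
  shows "\<exists>B\<ge>0. \<forall>i\<in>I. \<forall>n\<in>N. norm (F i n) \<le> B"
proof -
  have "bounded (\<Union>i\<in>I. F i ` N)"
    using assms by (intro bounded_UN) auto
  then obtain B where "\<forall>v\<in>(\<Union>i\<in>I. F i ` N). norm v \<le> B"
    unfolding bounded_iff by blast
  then show ?thesis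
    by (intro exI[of _ "max B 0"]) (auto simp: le_max_iff_disj)
qed

lemma norm_add_diff_le: "norm (a + b - c) \<le> norm a + norm b + norm (c :: 'a::real_normed_vector)"
  by (rule order_trans[OF norm_triangle_ineq4 add_right_mono[OF norm_triangle_ineq]])

lemma norm_convex_combination_sq_le:
  fixes p q :: "'a::real_normed_vector"
  assumes "0 \<le> t" "t \<le> 1"
  shows "(norm (t *\<^sub>R p + (1 - t) *\<^sub>R q))\<^sup>2 \<le> t * (norm p)\<^sup>2 + (1 - t) * (norm q)\<^sup>2"
proof -
  have "(norm (t *\<^sub>R p + (1 - t) *\<^sub>R q))\<^sup>2 \<le> (t * norm p + (1 - t) * norm q)\<^sup>2"
    using assms norm_triangle_ineq[of "t *\<^sub>R p" "(1 - t) *\<^sub>R q"] by (intro power_mono) auto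
  also have "\<dots> = t * (norm p)\<^sup>2 + (1 - t) * (norm q)\<^sup>2 - t * (1 - t) * (norm p - norm q)\<^sup>2"
    by (simp add: power2_eq_square algebra_simps)
  also have "\<dots> \<le> t * (norm p)\<^sup>2 + (1 - t) * (norm q)\<^sup>2"
    using assms by simp
  finally show ?thesis .
qed

lemma norm_add_scaled_sq_le:
  fixes v e :: "'a::real_inner"
  assumes "0 \<le> t" "t \<le> 1"
  shows "(norm (v + t *\<^sub>R e))\<^sup>2 \<le> (norm v)\<^sup>2 + t * (2 * norm v * norm e + (norm e)\<^sup>2)"
proof -
  have "(norm (v + t *\<^sub>R e))\<^sup>2 = (norm v)\<^sup>2 + 2 * t * inner v e + t * (t * (norm e)\<^sup>2)"
    unfolding power2_norm_eq_inner by (simp add: inner_add_left inner_add_right inner_commute algebra_simps)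
  moreover have "t * inner v e \<le> t * (norm v * norm e)"
    using assms norm_cauchy_schwarz[of v e] by (intro mult_left_mono) auto
  moreover have "t * (norm e)\<^sup>2 \<le> 1 * (norm e)\<^sup>2"
    using assms by (intro mult_right_mono) auto
  then have "t * (t * (norm e)\<^sup>2) \<le> t * (norm e)\<^sup>2"
    using assms by (intro mult_left_mono) auto
  ultimately show ?thesis
    by (simp add: algebra_simps)
qed

lemma norm_average_le:
  assumes "finite A" "A \<noteq> {}" "\<And>i. i \<in> A \<Longrightarrow> norm (v i) \<le> B"
  shows "norm ((1 / real (card A)) *\<^sub>R (\<Sum>i\<in>A. v i)) \<le> B"
proof -
  have "norm (\<Sum>i\<in>A. v i) \<le> (\<Sum>i\<in>A. B)"
    using assms(3) by (intro order_trans[OF norm_sum sum_mono]) auto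
  moreover have "0 < real (card A)"
    using assms(1,2) by (simp add: card_gt_0_iff)
  ultimately show ?thesis
    by (simp add: field_simps)
qed

lemma bounded_damped_recursion:
  fixes r b :: "nat \<Rightarrow> real"
  assumes r0: "\<And>n. 0 \<le> r n" and b0: "\<And>n. 0 \<le> b n" and b: "b \<longlonglongrightarrow> 0"
    and rec: "\<And>n. n \<ge> k \<Longrightarrow> r (Suc n) \<le> G + b n * r n"
  shows "\<exists>B. \<forall>n. r n \<le> B"
proof -
  obtain N where N: "\<And>n. n \<ge> N \<Longrightarrow> b n \<le> 1 / 2"
    using order_tendstoD(2)[OF b, of "1 / 2"] unfolding eventually_sequentially
    by (meson less_imp_le zero_less_divide_1_iff zero_less_numeral)
  define N' where "N' = max N k"
  define B where "B = max (Max (r ` {..N'})) (2 * G)"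
  have init: "r n \<le> B" if "n \<le> N'" for n
    using that unfolding B_def by (intro max.coboundedI1 Max_ge) auto
  have "r n \<le> B" if "n \<ge> N'" for n
    using that
  proof (induction n rule: dec_induct)
    case base
    then show ?case by (rule init[OF order_refl])
  next
    case (step n)
    have "b n * r n \<le> 1 / 2 * B"
      using N[of n] step r0[of n] b0[of n] by (intro mult_mono) (auto simp: N'_def)
    moreover have "2 * G \<le> B"
      by (simp add: B_def)
    ultimately show ?case
      using rec[of n] step(1) by (simp add: N'_def)
  qed
  then show ?thesis
    using init by (metis nat_le_linear)
qed

lemma contraction_exp_bound:
  fixes b g :: "nat \<Rightarrow> real"
  assumes b0: "\<And>n. 0 \<le> b n" and rec: "\<And>n. n \<ge> N \<Longrightarrow> b (Suc n) \<le> (1 - g n) * b n"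
    and n: "n \<ge> N"
  shows "b n \<le> b N * exp ((\<Sum>k<N. g k) - (\<Sum>k<n. g k))"
  using n
proof (induction n rule: dec_induct)
  case (step n)
  have "b (Suc n) \<le> exp (- g n) * b n"
    using rec[OF step(1)] exp_ge_add_one_self[of "- g n"] mult_right_mono[OF _ b0[of n]] by force
  also have "\<dots> \<le> exp (- g n) * (b N * exp ((\<Sum>k<N. g k) - (\<Sum>k<n. g k)))"
    using step(3) by (intro mult_left_mono) auto
  also have "\<dots> = b N * exp ((\<Sum>k<N. g k) - (\<Sum>k<Suc n. g k))"
    by (simp add: mult_exp_exp)
  finally show ?case .
qed simp

lemma perturbed_contraction_tendsto_zero:
  fixes a g e :: "nat \<Rightarrow> real"
  assumes a0: "\<And>n. 0 \<le> a n" and g: "\<And>n. 0 \<le> g n \<and> g n \<le> 1"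
    and rec: "\<And>n. n \<ge> N \<Longrightarrow> a (Suc n) \<le> (1 - g n) * a n + g n * e n"
    and div: "filterlim (\<lambda>n. \<Sum>k<n. g k) at_top sequentially"
    and e0: "e \<longlonglongrightarrow> 0"
  shows "a \<longlonglongrightarrow> 0"
proof (rule LIMSEQ_I)
  fix r :: real assume "r > 0"
  define \<epsilon> where "\<epsilon> = r / 2"
  have \<epsilon>: "\<epsilon> > 0"
    using \<open>r > 0\<close> by (simp add: \<epsilon>_def)
  obtain N1 where N1: "\<And>n. n \<ge> N1 \<Longrightarrow> e n < \<epsilon>"
    using order_tendstoD(2)[OF e0 \<epsilon>] unfolding eventually_sequentially by blast
  define N' where "N' = max N N1"
  define S where "S n = (\<Sum>k<n. g k)" for n
  define b where "b n = max (a n - \<epsilon>) 0" for n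
  have "b (Suc n) \<le> (1 - g n) * b n" if "n \<ge> N'" for n
  proof -
    have "a (Suc n) - \<epsilon> \<le> (1 - g n) * (a n - \<epsilon>)"
      using rec[of n] N1[of n] g[of n] that mult_left_mono[of "e n" \<epsilon> "g n"]
      by (simp add: N'_def algebra_simps)
    then show ?thesis
      using g[of n] unfolding b_def by (smt (verit) mult_left_mono mult_nonneg_nonneg)
  qed
  then have b_decay: "b n \<le> b N' * exp (S N' - S n)" if "n \<ge> N'" for n
    unfolding S_def using that by (intro contraction_exp_bound) (auto simp: b_def)
  obtain n0 where n0: "\<And>n. n \<ge> n0 \<Longrightarrow> S N' + b N' / \<epsilon> \<le> S n"
    using div unfolding filterlim_at_top eventually_sequentially S_def by blast
  have "a n < r" if "n \<ge> max N' n0" for n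
  proof -
    have "b N' / \<epsilon> < exp (S n - S N')"
      using n0[of n] that exp_ge_add_one_self[of "S n - S N'"] by linarith
    then have "b N' * exp (S N' - S n) < \<epsilon>"
      using \<epsilon> by (simp add: exp_diff field_simps)
    then show ?thesis
      using b_decay[of n] that by (simp add: b_def \<epsilon>_def)
  qed
  then show "\<exists>M. \<forall>n\<ge>M. norm (a n - 0) < r"
    using a0 by (metis abs_of_nonneg diff_zero real_norm_def)
qed

text \<open>The perturbation on the right is written as \<open>a'\<close> times the sequences of conditions
  (C2), (C5), (C7) and (C3).\<close>
lemma normalized_recursion_step:
  fixes l l' a a' \<theta> \<beta> D D' K \<sigma> :: real
  assumes l: "0 < l'" "l' \<le> l" "l / l' \<le> \<sigma>" and a: "0 < a'" "a' \<le> 1"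
    and \<theta>: "0 \<le> \<theta>" and \<beta>: "0 \<le> \<beta>" and D: "0 \<le> D" "D \<le> K"
    and rec: "D' \<le> (1 - a') * D + K * (\<theta> + (l - l') / l' + l * \<beta> + \<bar>a' - a\<bar>)"
  shows "D' / l' \<le> (1 - a') * (D / l) + a' * (K * ((1 + \<sigma>) * (1 / a' * \<bar>1 / l' - 1 / l\<bar>)
    + \<theta> / (a' * l') + \<sigma> * (\<beta> / a') + 1 / l' * \<bar>1 - a / a'\<bar>))"
proof -
  define q where "q = 1 / l' - 1 / l"
  have q: "0 \<le> q"
    using l by (simp add: q_def field_simps)
  have K: "0 \<le> K"
    using D by linarith
  have "D' / l' \<le> ((1 - a') * D + K * (\<theta> + (l - l') / l' + l * \<beta> + \<bar>a' - a\<bar>)) / l'"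
    using rec l by (simp add: divide_right_mono)
  also have "\<dots> = (1 - a') * (D / l) + (1 - a') * (D * q)
      + K * (\<theta> / l' + (l / l') * q + \<beta> * (l / l') + \<bar>a' - a\<bar> / l')"
    using l by (simp add: q_def field_simps)
  also have "\<dots> \<le> (1 - a') * (D / l) + K * q + K * (\<theta> / l' + \<sigma> * q + \<beta> * \<sigma> + \<bar>a' - a\<bar> / l')"
  proof -
    have "(1 - a') * (D * q) \<le> 1 * (D * q)"
      using a D q by (intro mult_right_mono) auto
    also have "\<dots> \<le> K * q"
      using D q by (simp add: mult_right_mono)
    finally have "(1 - a') * (D * q) \<le> K * q" .
    moreover have "(l / l') * q + \<beta> * (l / l') \<le> \<sigma> * q + \<beta> * \<sigma>"
      using l q \<beta> by (intro add_mono mult_right_mono mult_left_mono) auto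
    ultimately show ?thesis
      using K by (smt (verit) mult_left_mono)
  qed
  also have "\<dots> = (1 - a') * (D / l) + a' * (K * ((1 + \<sigma>) * (1 / a' * \<bar>1 / l' - 1 / l\<bar>)
      + \<theta> / (a' * l') + \<sigma> * (\<beta> / a') + 1 / l' * \<bar>1 - a / a'\<bar>))"
  proof -
    have "\<bar>1 / l' - 1 / l\<bar> = q" and "a' * \<bar>1 - a / a'\<bar> = \<bar>a' - a\<bar>"
      using q a by (simp_all add: q_def abs_mult[symmetric] field_simps)
    then show ?thesis
      using a by (simp add: field_simps)
  qed
  finally show ?thesis .
qed

lemma normalized_recursion_tendsto_zero:
  fixes D \<theta> lam \<beta> \<alpha> :: "nat \<Rightarrow> real"
  assumes D: "\<And>n. 0 \<le> D n" "\<And>n. D n \<le> K"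
    and rec: "\<And>n. n \<ge> 1 \<Longrightarrow> D (Suc n) \<le> (1 - \<alpha> (Suc n)) * D n
      + K * (\<theta> n + (lam n - lam (Suc n)) / lam (Suc n) + lam n * \<beta> n + \<bar>\<alpha> (Suc n) - \<alpha> n\<bar>)"
    and lam: "\<And>n. 0 < lam n" "decseq lam" "\<And>n. lam n / lam (Suc n) \<le> \<sigma>"
    and \<theta>: "\<And>n. 0 \<le> \<theta> n" and \<beta>: "\<And>n. 0 \<le> \<beta> n" and \<alpha>: "\<And>n. 0 < \<alpha> n \<and> \<alpha> n \<le> 1"
    and C1: "filterlim (\<lambda>n. \<Sum>k\<le>n. \<alpha> k) at_top sequentially"
    and C2: "(\<lambda>n. (1 / \<alpha> (Suc n)) * \<bar>1 / lam (Suc n) - 1 / lam n\<bar>) \<longlonglongrightarrow> 0"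
    and C3: "(\<lambda>n. (1 / lam (Suc n)) * \<bar>1 - \<alpha> n / \<alpha> (Suc n)\<bar>) \<longlonglongrightarrow> 0"
    and C5: "(\<lambda>n. \<theta> n / (\<alpha> (Suc n) * lam (Suc n))) \<longlonglongrightarrow> 0"
    and C7: "(\<lambda>n. \<beta> n / \<alpha> (Suc n)) \<longlonglongrightarrow> 0"
  shows "(\<lambda>n. D n / lam n) \<longlonglongrightarrow> 0"
proof (rule perturbed_contraction_tendsto_zero[where g = "\<lambda>n. \<alpha> (Suc n)" and N = 1 and
      e = "\<lambda>n. K * ((1 + \<sigma>) * ((1 / \<alpha> (Suc n)) * \<bar>1 / lam (Suc n) - 1 / lam n\<bar>)
        + \<theta> n / (\<alpha> (Suc n) * lam (Suc n)) + \<sigma> * (\<beta> n / \<alpha> (Suc n))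
        + (1 / lam (Suc n)) * \<bar>1 - \<alpha> n / \<alpha> (Suc n)\<bar>)"])
  show "0 \<le> D n / lam n" for n
    using D lam by (simp add: less_imp_le)
  show "0 \<le> \<alpha> (Suc n) \<and> \<alpha> (Suc n) \<le> 1" for n
    using \<alpha> by (simp add: less_imp_le)
  show "D (Suc n) / lam (Suc n) \<le> (1 - \<alpha> (Suc n)) * (D n / lam n) + \<alpha> (Suc n) * (K * ((1 + \<sigma>)
      * ((1 / \<alpha> (Suc n)) * \<bar>1 / lam (Suc n) - 1 / lam n\<bar>) + \<theta> n / (\<alpha> (Suc n) * lam (Suc n))
      + \<sigma> * (\<beta> n / \<alpha> (Suc n)) + (1 / lam (Suc n)) * \<bar>1 - \<alpha> n / \<alpha> (Suc n)\<bar>))"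
    if "n \<ge> 1" for n
    using lam(2) by (intro normalized_recursion_step rec[OF that] lam(1,3) \<theta> \<beta> D
        \<alpha>[THEN conjunct1] \<alpha>[THEN conjunct2])
      (auto simp: decseq_Suc_iff)
  have "(\<lambda>n. \<Sum>k<n. \<alpha> (Suc k)) = (\<lambda>n. - \<alpha> 0 + (\<Sum>k\<le>n. \<alpha> k))"
    by (simp add: sum.atMost_shift)
  then show "filterlim (\<lambda>n. \<Sum>k<n. \<alpha> (Suc k)) at_top sequentially"
    using filterlim_tendsto_add_at_top[OF tendsto_const C1] by metis
  have "(\<lambda>n. K * ((1 + \<sigma>) * ((1 / \<alpha> (Suc n)) * \<bar>1 / lam (Suc n) - 1 / lam n\<bar>)
      + \<theta> n / (\<alpha> (Suc n) * lam (Suc n)) + \<sigma> * (\<beta> n / \<alpha> (Suc n))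
      + (1 / lam (Suc n)) * \<bar>1 - \<alpha> n / \<alpha> (Suc n)\<bar>)) \<longlonglongrightarrow> K * ((1 + \<sigma>) * 0 + 0 + \<sigma> * 0 + 0)"
    by (intro tendsto_mult tendsto_add tendsto_const C2 C3 C5 C7)
  then show "(\<lambda>n. K * ((1 + \<sigma>) * ((1 / \<alpha> (Suc n)) * \<bar>1 / lam (Suc n) - 1 / lam n\<bar>)
      + \<theta> n / (\<alpha> (Suc n) * lam (Suc n)) + \<sigma> * (\<beta> n / \<alpha> (Suc n))
      + (1 / lam (Suc n)) * \<bar>1 - \<alpha> n / \<alpha> (Suc n)\<bar>)) \<longlonglongrightarrow> 0"
    by simp
qed

section \<open>The algorithm\<close>

text \<open>Not needed are: the set \<open>S\<close> being
  nonempty, the minimization problem behind \<open>\<Omega>\<close>, condition (C4), \<open>\<sigma> \<ge> 1\<close>, monotonicity and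
  convergence of \<open>\<alpha>\<close>, convergence of \<open>\<theta>\<close>, and the initial direction \<open>d i 1\<close>.\<close>
locale distributed_accelerated_parallel =
  fixes M :: nat
    and f h :: "nat \<Rightarrow> 'a::{real_inner, complete_space} \<Rightarrow> real"
    and gradh :: "nat \<Rightarrow> 'a \<Rightarrow> 'a"
    and L :: "nat \<Rightarrow> real"
    and T :: "nat \<Rightarrow> 'a \<Rightarrow> 'a"
    and \<theta> lam \<beta> \<alpha> :: "nat \<Rightarrow> real"
    and \<sigma> :: real
    and u :: "nat \<Rightarrow> 'a"
    and x z :: "nat \<Rightarrow> 'a"
    and d y w :: "nat \<Rightarrow> nat \<Rightarrow> 'a"
  assumes M: "M \<ge> 1"
    and A1_cont: "\<And>i. i \<in> {1..M} \<Longrightarrow> continuous_on UNIV (f i)"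
    and A1_conv: "\<And>i. i \<in> {1..M} \<Longrightarrow> convex_on UNIV (f i)"
    and A2_conv: "\<And>i. i \<in> {1..M} \<Longrightarrow> convex_on UNIV (h i)"
    and A2_grad: "\<And>i v. i \<in> {1..M} \<Longrightarrow>
                    (h i has_derivative (\<lambda>e. inner (gradh i v) e)) (at v)"
    and A2_L: "\<And>i. i \<in> {1..M} \<Longrightarrow> L i > 0"
    and A2_lip: "\<And>i v v'. i \<in> {1..M} \<Longrightarrow>
                    norm (gradh i v - gradh i v') \<le> (1 / L i) * norm (v - v')"
    and A3: "\<And>i. i \<in> {1..M} \<Longrightarrow> firmly_nonexpansive (T i)"
    and dec: "decseq \<theta>" "decseq lam" "decseq \<beta>"
    and lim0: "lam \<longlonglongrightarrow> 0" "\<beta> \<longlonglongrightarrow> 0"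
    and theta_rng: "\<And>n. 0 \<le> \<theta> n \<and> \<theta> n < 1"
    and lam_rng: "\<And>n. 0 < lam n \<and> lam n \<le> 2 * Min (L ` {1..M})"
    and beta_rng: "\<And>n. 0 < \<beta> n \<and> \<beta> n \<le> 1"
    and alpha_rng: "\<And>n. 0 < \<alpha> n \<and> \<alpha> n \<le> 1"
    and C1: "filterlim (\<lambda>n. \<Sum>k\<le>n. \<alpha> k) at_top sequentially"
    and C2: "(\<lambda>n. (1 / \<alpha> (Suc n)) * \<bar>1 / lam (Suc n) - 1 / lam n\<bar>) \<longlonglongrightarrow> 0"
    and C3: "(\<lambda>n. (1 / lam (Suc n)) * \<bar>1 - \<alpha> n / \<alpha> (Suc n)\<bar>) \<longlonglongrightarrow> 0"
    and C5: "(\<lambda>n. \<theta> n / (\<alpha> (Suc n) * lam (Suc n))) \<longlonglongrightarrow> 0"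
    and C6: "\<And>n. lam n / lam (Suc n) \<le> \<sigma>"
    and C7: "(\<lambda>n. \<beta> n / \<alpha> (Suc n)) \<longlonglongrightarrow> 0"
    and z_def: "\<And>n. n \<ge> 1 \<Longrightarrow> z n = x n + \<theta> n *\<^sub>R (x n - x (n - 1))"
    and d_def: "\<And>i n. i \<in> {1..M} \<Longrightarrow> n \<ge> 1 \<Longrightarrow>
                  d i (Suc n) = - gradh i (z n) + \<beta> n *\<^sub>R d i n"
    and y_def: "\<And>i n. i \<in> {1..M} \<Longrightarrow> n \<ge> 1 \<Longrightarrow>
                  y i n = prox (lam n) (f i) (z n + lam n *\<^sub>R d i (Suc n))"
    and w_def: "\<And>i n. i \<in> {1..M} \<Longrightarrow> n \<ge> 1 \<Longrightarrow>
                  w i n = \<alpha> n *\<^sub>R u i + (1 - \<alpha> n) *\<^sub>R T i (y i n)"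
    and x_def: "\<And>n. n \<ge> 1 \<Longrightarrow>
                  x (Suc n) = (1 / real M) *\<^sub>R (\<Sum>i\<in>{1..M}. w i n)"
    and y_bdd: "\<And>i. i \<in> {1..M} \<Longrightarrow> bounded (y i ` {1..})"
begin

lemma lam_pos: "0 < lam n"
  using lam_rng by simp

lemma lam_step: "lam (Suc n) \<le> lam n"
  using dec(2) by (simp add: decseq_Suc_iff)

lemma lam_le_first: "lam n \<le> lam 0"
  using dec(2) by (simp add: decseq_def)

lemma lam_le_2L:
  assumes "i \<in> {1..M}"
  shows "lam n \<le> 2 * L i"
proof -
  have "Min (L ` {1..M}) \<le> L i"
    using assms by (intro Min_le) auto
  then show ?thesis
    using lam_rng[of n] by linarith
qed

lemma T_nonexpansive: "i \<in> {1..M} \<Longrightarrow> norm (T i a - T i b) \<le> norm (a - b)"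
  using firmly_nonexpansive_imp_nonexpansive[OF A3] .

lemma bounded_T_y:
  assumes i: "i \<in> {1..M}"
  shows "bounded ((\<lambda>n. T i (y i n)) ` {1..})"
proof -
  obtain B where B: "\<And>n. n \<ge> 1 \<Longrightarrow> norm (y i n) \<le> B"
    using y_bdd[OF i] unfolding bounded_iff by auto
  have "norm (T i (y i n)) \<le> norm (T i 0) + B" if n: "n \<ge> 1" for n
  proof -
    have "norm (T i (y i n)) \<le> norm (T i 0) + norm (T i (y i n) - T i 0)"
      by (rule norm_triangle_sub)
    also have "\<dots> \<le> norm (T i 0) + B"
      using T_nonexpansive[OF i, of "y i n" 0] B[OF n] by simp
    finally show ?thesis .
  qed
  then show ?thesis
    unfolding bounded_iff by auto
qed

lemma bounded_w:
  assumes i: "i \<in> {1..M}"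
  shows "bounded (w i ` {1..})"
proof -
  obtain B where B: "\<And>n. n \<ge> 1 \<Longrightarrow> norm (T i (y i n)) \<le> B"
    using bounded_T_y[OF i] unfolding bounded_iff by auto
  have "norm (w i n) \<le> norm (u i) + B" if n: "n \<ge> 1" for n
  proof -
    have "norm (w i n) \<le> norm (\<alpha> n *\<^sub>R u i) + norm ((1 - \<alpha> n) *\<^sub>R T i (y i n))"
      unfolding w_def[OF i n] by (rule norm_triangle_ineq)
    also have "\<dots> = \<alpha> n * norm (u i) + (1 - \<alpha> n) * norm (T i (y i n))"
      using alpha_rng[of n] by simp
    also have "\<dots> \<le> 1 * norm (u i) + 1 * B"
      using alpha_rng[of n] B[OF n] by (intro add_mono mult_mono) auto
    finally show ?thesis
      by simp
  qed
  then show ?thesis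
    unfolding bounded_iff by blast
qed

lemma bounded_u_minus_T_y:
  assumes i: "i \<in> {1..M}"
  shows "bounded ((\<lambda>n. u i - T i (y i n)) ` {1..})"
proof -
  obtain B where B: "\<And>n. n \<ge> 1 \<Longrightarrow> norm (T i (y i n)) \<le> B"
    using bounded_T_y[OF i] unfolding bounded_iff by auto
  have "norm (u i - T i (y i n)) \<le> norm (u i) + B" if "n \<ge> 1" for n
    using norm_triangle_ineq4[of "u i" "T i (y i n)"] B[OF that] by simp
  then show ?thesis
    unfolding bounded_iff by blast
qed

lemma bounded_x: "bounded (range x)"
proof -
  obtain B where "0 \<le> B" and B: "\<And>i n. i \<in> {1..M} \<Longrightarrow> n \<in> {1..} \<Longrightarrow> norm (w i n) \<le> B"
    using bounded_family_norm_le[of "{1..M}" w "{1..}", OF finite_atLeastAtMost bounded_w] by auto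
  have "norm (x n) \<le> max (max (norm (x 0)) (norm (x 1))) B" for n
  proof (cases "n \<le> 1")
    case False
    then obtain m where m: "n = Suc m" "m \<ge> 1"
      by (cases n) auto
    have "norm (x n) \<le> B"
      unfolding m(1) x_def[OF m(2)] using norm_average_le[of "{1..M}" "\<lambda>i. w i m" B] M B m(2)
      by simp
    then show ?thesis
      by simp
  qed (auto simp: le_Suc_eq)
  then show ?thesis
    unfolding bounded_iff by blast
qed

lemma x_bound: "\<exists>X\<ge>0. \<forall>n. norm (x n) \<le> X"
  using bounded_x unfolding bounded_iff by (meson norm_ge_zero order_trans rangeI)

lemma bounded_z: "bounded (z ` {1..})"
proof -
  obtain X where X: "\<And>n. norm (x n) \<le> X"
    using x_bound by auto
  have "norm (z n) \<le> X + 1 * (X + X)" if n: "n \<ge> 1" for n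
  proof -
    have "norm (z n) \<le> norm (x n) + norm (\<theta> n *\<^sub>R (x n - x (n - 1)))"
      unfolding z_def[OF n] by (rule norm_triangle_ineq)
    also have "\<dots> = norm (x n) + \<theta> n * norm (x n - x (n - 1))"
      using theta_rng[of n] by simp
    also have "\<dots> \<le> X + 1 * (X + X)"
      using theta_rng[of n] X[of n] X[of "n - 1"] norm_triangle_ineq4[of "x n" "x (n - 1)"]
      by (intro add_mono mult_mono) auto
    finally show ?thesis .
  qed
  then show ?thesis
    unfolding bounded_iff by auto
qed

lemma bounded_gradient_z:
  assumes i: "i \<in> {1..M}"
  shows "bounded ((\<lambda>n. gradh i (z n)) ` {1..})"
proof -
  obtain Z where Z: "\<And>n. n \<ge> 1 \<Longrightarrow> norm (z n) \<le> Z"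
    using bounded_z unfolding bounded_iff by auto
  have "norm (gradh i (z n)) \<le> norm (gradh i 0) + (1 / L i) * Z" if n: "n \<ge> 1" for n
  proof -
    have "norm (gradh i (z n)) \<le> norm (gradh i 0) + norm (gradh i (z n) - gradh i 0)"
      by (rule norm_triangle_sub)
    also have "\<dots> \<le> norm (gradh i 0) + (1 / L i) * Z"
      using A2_lip[OF i, of "z n" 0] mult_left_mono[OF Z[OF n], of "1 / L i"] A2_L[OF i] by simp
    finally show ?thesis .
  qed
  then show ?thesis
    unfolding bounded_iff by auto
qed

lemma bounded_d:
  assumes i: "i \<in> {1..M}"
  shows "bounded (range (d i))"
proof -
  obtain G where G: "\<And>n. n \<ge> 1 \<Longrightarrow> norm (gradh i (z n)) \<le> G"
    using bounded_gradient_z[OF i] unfolding bounded_iff by auto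
  have "\<exists>B. \<forall>n. norm (d i n) \<le> B"
  proof (rule bounded_damped_recursion[where b = \<beta> and G = G and k = 1])
    show "0 \<le> \<beta> n" for n
      using beta_rng[of n] by simp
    fix n :: nat assume n: "n \<ge> 1"
    have "norm (d i (Suc n)) \<le> norm (- gradh i (z n)) + norm (\<beta> n *\<^sub>R d i n)"
      unfolding d_def[OF i n] by (rule norm_triangle_ineq)
    then show "norm (d i (Suc n)) \<le> G + \<beta> n * norm (d i n)"
      using G[OF n] beta_rng[of n] by simp
  qed (use lim0(2) in auto)
  then show ?thesis
    unfolding bounded_iff by auto
qed

definition prox_arg :: "nat \<Rightarrow> nat \<Rightarrow> 'a" where
  "prox_arg i n = z n + lam n *\<^sub>R d i (Suc n)"

lemma y_eq_prox: "i \<in> {1..M} \<Longrightarrow> n \<ge> 1 \<Longrightarrow> y i n = prox (lam n) (f i) (prox_arg i n)"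
  unfolding prox_arg_def by (rule y_def)

lemma bounded_prox_residual:
  assumes i: "i \<in> {1..M}"
  shows "bounded ((\<lambda>n. prox_arg i n - y i n) ` {1..})"
proof -
  obtain Z where Z: "\<And>n. n \<ge> 1 \<Longrightarrow> norm (z n) \<le> Z"
    using bounded_z unfolding bounded_iff by auto
  obtain D where D: "\<And>n. norm (d i n) \<le> D"
    using bounded_d[OF i] unfolding bounded_iff by auto
  obtain Y where Y: "\<And>n. n \<ge> 1 \<Longrightarrow> norm (y i n) \<le> Y"
    using y_bdd[OF i] unfolding bounded_iff by auto
  have "norm (prox_arg i n - y i n) \<le> Z + lam 0 * D + Y" if n: "n \<ge> 1" for n
  proof -
    have "norm (prox_arg i n - y i n) \<le> norm (z n) + norm (lam n *\<^sub>R d i (Suc n)) + norm (y i n)"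
      unfolding prox_arg_def by (rule norm_add_diff_le)
    moreover have "norm (lam n *\<^sub>R d i (Suc n)) \<le> lam 0 * D"
      using lam_pos[of n] lam_le_first[of n] D[of "Suc n"] by (simp add: mult_mono)
    ultimately show ?thesis
      using Z[OF n] Y[OF n] by linarith
  qed
  then show ?thesis
    unfolding bounded_iff by auto
qed

lemma norm_z_step_le:
  assumes n: "n \<ge> 1"
  shows "norm (z (Suc n) - z n)
    \<le> norm (x (Suc n) - x n) + \<theta> n * (norm (x (Suc n) - x n) + norm (x n - x (n - 1)))"
proof -
  have eq: "z (Suc n) - z n
      = (x (Suc n) - x n) + \<theta> (Suc n) *\<^sub>R (x (Suc n) - x n) - \<theta> n *\<^sub>R (x n - x (n - 1))"
    using z_def[OF n] z_def[of "Suc n"] by simp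
  have "norm (z (Suc n) - z n) \<le> norm (x (Suc n) - x n)
      + norm (\<theta> (Suc n) *\<^sub>R (x (Suc n) - x n)) + norm (\<theta> n *\<^sub>R (x n - x (n - 1)))"
    unfolding eq by (rule norm_add_diff_le)
  also have "\<dots> \<le> norm (x (Suc n) - x n) + \<theta> n * norm (x (Suc n) - x n) + \<theta> n * norm (x n - x (n - 1))"
    using theta_rng[of n] theta_rng[of "Suc n"] dec(1)
    by (simp add: decseq_Suc_iff mult_right_mono)
  finally show ?thesis
    by (simp add: algebra_simps)
qed

lemma norm_prox_arg_step_le:
  assumes i: "i \<in> {1..M}" and n: "n \<ge> 1"
  shows "norm (prox_arg i (Suc n) - prox_arg i n) \<le> norm (z (Suc n) - z n)
    + (lam n - lam (Suc n)) * norm (gradh i (z n)) + lam n * \<beta> n * (norm (d i (Suc n)) + norm (d i n))"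
proof -
  let ?G = "gradh i"
  have d2: "d i (Suc (Suc n)) = - ?G (z (Suc n)) + \<beta> (Suc n) *\<^sub>R d i (Suc n)"
    using d_def[OF i, of "Suc n"] by simp
  have "prox_arg i (Suc n) - prox_arg i n
      = ((z (Suc n) - lam (Suc n) *\<^sub>R ?G (z (Suc n))) - (z n - lam (Suc n) *\<^sub>R ?G (z n)))
        + ((lam n - lam (Suc n)) *\<^sub>R ?G (z n) + (lam (Suc n) * \<beta> (Suc n)) *\<^sub>R d i (Suc n))
        - (lam n * \<beta> n) *\<^sub>R d i n"
    unfolding prox_arg_def d2 d_def[OF i n] by (simp add: algebra_simps)
  then have "norm (prox_arg i (Suc n) - prox_arg i n)
      \<le> norm ((z (Suc n) - lam (Suc n) *\<^sub>R ?G (z (Suc n))) - (z n - lam (Suc n) *\<^sub>R ?G (z n)))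
        + norm ((lam n - lam (Suc n)) *\<^sub>R ?G (z n) + (lam (Suc n) * \<beta> (Suc n)) *\<^sub>R d i (Suc n))
        + norm ((lam n * \<beta> n) *\<^sub>R d i n)"
    by (simp only: norm_add_diff_le)
  moreover have "norm ((lam n - lam (Suc n)) *\<^sub>R ?G (z n) + (lam (Suc n) * \<beta> (Suc n)) *\<^sub>R d i (Suc n))
      \<le> norm ((lam n - lam (Suc n)) *\<^sub>R ?G (z n)) + norm ((lam (Suc n) * \<beta> (Suc n)) *\<^sub>R d i (Suc n))"
    by (rule norm_triangle_ineq)
  moreover have "norm ((z (Suc n) - lam (Suc n) *\<^sub>R ?G (z (Suc n))) - (z n - lam (Suc n) *\<^sub>R ?G (z n)))
      \<le> norm (z (Suc n) - z n)"
    using lam_pos[of "Suc n"] lam_le_2L[OF i, of "Suc n"]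
    by (intro gradient_step_nonexpansive[OF A2_grad[OF i] A2_conv[OF i] A2_L[OF i] A2_lip[OF i]]) auto
  moreover have "norm ((lam (Suc n) * \<beta> (Suc n)) *\<^sub>R d i (Suc n)) \<le> lam n * \<beta> n * norm (d i (Suc n))"
    using lam_pos[of "Suc n"] beta_rng[of "Suc n"] lam_step[of n] dec(3)
    by (simp add: decseq_Suc_iff mult_mono mult_right_mono)
  moreover have "norm ((lam n - lam (Suc n)) *\<^sub>R ?G (z n)) = (lam n - lam (Suc n)) * norm (?G (z n))"
    using lam_step[of n] by simp
  moreover have "norm ((lam n * \<beta> n) *\<^sub>R d i n) = lam n * \<beta> n * norm (d i n)"
    using lam_pos[of n] beta_rng[of n] by simp
  ultimately show ?thesis
    unfolding distrib_left by linarith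
qed

lemma norm_y_step_le:
  assumes i: "i \<in> {1..M}" and n: "n \<ge> 1"
  shows "norm (y i (Suc n) - y i n) \<le> norm (prox_arg i (Suc n) - prox_arg i n)
    + (lam n - lam (Suc n)) / lam (Suc n) * norm (prox_arg i (Suc n) - y i (Suc n))"
  using norm_prox_diff_le[OF A1_cont[OF i] A1_conv[OF i] lam_pos[of "Suc n"] lam_pos[of n],
      of "prox_arg i (Suc n)" "prox_arg i n"] lam_step[of n]
  by (simp add: y_eq_prox[OF i n] y_eq_prox[OF i, of "Suc n"])

lemma norm_w_step_le:
  assumes i: "i \<in> {1..M}" and n: "n \<ge> 1"
  shows "norm (w i (Suc n) - w i n)
    \<le> \<bar>\<alpha> (Suc n) - \<alpha> n\<bar> * norm (u i - T i (y i n)) + (1 - \<alpha> (Suc n)) * norm (y i (Suc n) - y i n)"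
proof -
  have "w i (Suc n) - w i n = (\<alpha> (Suc n) - \<alpha> n) *\<^sub>R (u i - T i (y i n))
      + (1 - \<alpha> (Suc n)) *\<^sub>R (T i (y i (Suc n)) - T i (y i n))"
    using w_def[OF i n] w_def[OF i, of "Suc n"] by (simp add: algebra_simps)
  then have "norm (w i (Suc n) - w i n) \<le> norm ((\<alpha> (Suc n) - \<alpha> n) *\<^sub>R (u i - T i (y i n)))
      + norm ((1 - \<alpha> (Suc n)) *\<^sub>R (T i (y i (Suc n)) - T i (y i n)))"
    by (simp only: norm_triangle_ineq)
  also have "\<dots> = \<bar>\<alpha> (Suc n) - \<alpha> n\<bar> * norm (u i - T i (y i n))
      + (1 - \<alpha> (Suc n)) * norm (T i (y i (Suc n)) - T i (y i n))"
    using alpha_rng[of "Suc n"] by simp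
  also have "\<dots> \<le> \<bar>\<alpha> (Suc n) - \<alpha> n\<bar> * norm (u i - T i (y i n)) + (1 - \<alpha> (Suc n)) * norm (y i (Suc n) - y i n)"
    using alpha_rng[of "Suc n"] T_nonexpansive[OF i] by (simp add: mult_left_mono)
  finally show ?thesis .
qed

lemma norm_y_step_le_bounds:
  assumes i: "i \<in> {1..M}" and n: "n \<ge> 1"
    and X: "\<And>n. norm (x n) \<le> X" and G: "norm (gradh i (z n)) \<le> G"
    and D: "\<And>n. norm (d i n) \<le> D" and R: "norm (prox_arg i (Suc n) - y i (Suc n)) \<le> R"
  shows "norm (y i (Suc n) - y i n) \<le> norm (x (Suc n) - x n) + 4 * X * \<theta> n
    + (lam 0 * G + R) * ((lam n - lam (Suc n)) / lam (Suc n)) + 2 * D * (lam n * \<beta> n)"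
proof -
  define r where "r = (lam n - lam (Suc n)) / lam (Suc n)"
  have r0: "0 \<le> r"
    using lam_step[of n] lam_pos[of "Suc n"] by (simp add: r_def)
  have "lam n - lam (Suc n) = lam (Suc n) * r"
    using lam_pos[of "Suc n"] by (simp add: r_def)
  also have "\<dots> \<le> lam 0 * r"
    using lam_le_first r0 by (rule mult_right_mono)
  finally have "(lam n - lam (Suc n)) * norm (gradh i (z n)) \<le> (lam 0 * r) * G"
    using lam_step[of n] G by (intro mult_mono) auto
  moreover have "norm (z (Suc n) - z n) \<le> norm (x (Suc n) - x n) + \<theta> n * (4 * X)"
  proof -
    have "norm (x (Suc n) - x n) + norm (x n - x (n - 1)) \<le> 4 * X"
      using X[of "Suc n"] X[of n] X[of "n - 1"]
        norm_triangle_ineq4[of "x (Suc n)" "x n"] norm_triangle_ineq4[of "x n" "x (n - 1)"] by linarith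
    then have "\<theta> n * (norm (x (Suc n) - x n) + norm (x n - x (n - 1))) \<le> \<theta> n * (4 * X)"
      using theta_rng[of n] by (intro mult_left_mono) auto
    then show ?thesis
      using norm_z_step_le[OF n] by linarith
  qed
  moreover have "lam n * \<beta> n * (norm (d i (Suc n)) + norm (d i n)) \<le> lam n * \<beta> n * (2 * D)"
    using D[of "Suc n"] D[of n] lam_pos[of n] beta_rng[of n] by (intro mult_left_mono) auto
  moreover have "r * norm (prox_arg i (Suc n) - y i (Suc n)) \<le> r * R"
    using R r0 by (rule mult_left_mono)
  ultimately show ?thesis
    using norm_y_step_le[OF i n] norm_prox_arg_step_le[OF i n] unfolding r_def[symmetric]
    by (simp add: algebra_simps)
qed

lemma norm_y_step_bound:
  "\<exists>K\<ge>0. \<forall>i\<in>{1..M}. \<forall>n\<ge>1. norm (y i (Suc n) - y i n) \<le> norm (x (Suc n) - x n)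
      + K * (\<theta> n + (lam n - lam (Suc n)) / lam (Suc n) + lam n * \<beta> n)"
proof -
  obtain X where X0: "0 \<le> X" and X: "\<And>n. norm (x n) \<le> X"
    using x_bound by auto
  obtain G where G0: "0 \<le> G" and G: "\<And>i n. i \<in> {1..M} \<Longrightarrow> n \<in> {1..} \<Longrightarrow> norm (gradh i (z n)) \<le> G"
    using bounded_family_norm_le[of "{1..M}" "\<lambda>i n. gradh i (z n)" "{1..}",
        OF finite_atLeastAtMost bounded_gradient_z] by auto
  obtain D where D0: "0 \<le> D" and D: "\<And>i n. i \<in> {1..M} \<Longrightarrow> n \<in> UNIV \<Longrightarrow> norm (d i n) \<le> D"
    using bounded_family_norm_le[of "{1..M}" d UNIV, OF finite_atLeastAtMost bounded_d] by auto
  obtain R where R0: "0 \<le> R" and R: "\<And>i n. i \<in> {1..M} \<Longrightarrow> n \<in> {1..} \<Longrightarrow> norm (prox_arg i n - y i n) \<le> R"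
    using bounded_family_norm_le[of "{1..M}" "\<lambda>i n. prox_arg i n - y i n" "{1..}",
        OF finite_atLeastAtMost bounded_prox_residual] by auto
  define K where "K = 4 * X + lam 0 * G + 2 * D + R"
  have K: "4 * X \<le> K" "lam 0 * G + R \<le> K" "2 * D \<le> K"
    using X0 G0 D0 R0 lam_pos[of 0] by (simp_all add: K_def)
  show ?thesis
  proof (intro exI[of _ K] conjI ballI allI impI)
    show "0 \<le> K"
      using X0 K(1) by linarith
    fix i n :: nat assume i: "i \<in> {1..M}" and n: "n \<ge> 1"
    define r where "r = (lam n - lam (Suc n)) / lam (Suc n)"
    have "4 * X * \<theta> n + (lam 0 * G + R) * r + 2 * D * (lam n * \<beta> n)
        \<le> K * \<theta> n + K * r + K * (lam n * \<beta> n)"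
      using K theta_rng[of n] lam_step[of n] lam_pos[of n] lam_pos[of "Suc n"] beta_rng[of n]
      unfolding r_def by (intro add_mono mult_right_mono) auto
    then show "norm (y i (Suc n) - y i n) \<le> norm (x (Suc n) - x n) + K * (\<theta> n + r + lam n * \<beta> n)"
      using norm_y_step_le_bounds[OF i n X G[OF i] D[OF i] R[OF i]] n unfolding r_def
      by (simp add: distrib_left)
  qed
qed

lemma norm_w_step_bound:
  "\<exists>K\<ge>0. \<forall>i\<in>{1..M}. \<forall>n\<ge>1. norm (w i (Suc n) - w i n) \<le> (1 - \<alpha> (Suc n)) * norm (x (Suc n) - x n)
      + K * (\<theta> n + (lam n - lam (Suc n)) / lam (Suc n) + lam n * \<beta> n + \<bar>\<alpha> (Suc n) - \<alpha> n\<bar>)"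
proof -
  obtain Ky where Ky0: "0 \<le> Ky" and Ky: "\<And>i n. i \<in> {1..M} \<Longrightarrow> n \<ge> 1 \<Longrightarrow>
      norm (y i (Suc n) - y i n) \<le> norm (x (Suc n) - x n)
        + Ky * (\<theta> n + (lam n - lam (Suc n)) / lam (Suc n) + lam n * \<beta> n)"
    using norm_y_step_bound by auto
  obtain U where U0: "0 \<le> U" and U: "\<And>i n. i \<in> {1..M} \<Longrightarrow> n \<in> {1..} \<Longrightarrow> norm (u i - T i (y i n)) \<le> U"
    using bounded_family_norm_le[of "{1..M}" "\<lambda>i n. u i - T i (y i n)" "{1..}",
        OF finite_atLeastAtMost bounded_u_minus_T_y] by auto
  show ?thesis
  proof (intro exI[of _ "Ky + U"] conjI ballI allI impI)
    show "0 \<le> Ky + U"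
      using Ky0 U0 by simp
    fix i n :: nat assume i: "i \<in> {1..M}" and n: "n \<ge> 1"
    define e where "e = \<theta> n + (lam n - lam (Suc n)) / lam (Suc n) + lam n * \<beta> n"
    define a where "a = \<bar>\<alpha> (Suc n) - \<alpha> n\<bar>"
    have e0: "0 \<le> e"
      using theta_rng[of n] lam_step[of n] lam_pos[of n] lam_pos[of "Suc n"] beta_rng[of n]
      by (simp add: e_def)
    have a1: "0 \<le> 1 - \<alpha> (Suc n)" "1 - \<alpha> (Suc n) \<le> 1"
      using alpha_rng[of "Suc n"] by simp_all
    have "a * norm (u i - T i (y i n)) \<le> a * U"
      using U[OF i, of n] n by (intro mult_left_mono) (auto simp: a_def)
    moreover have "(1 - \<alpha> (Suc n)) * norm (y i (Suc n) - y i n)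
        \<le> (1 - \<alpha> (Suc n)) * (norm (x (Suc n) - x n) + Ky * e)"
      using Ky[OF i n] a1(1) unfolding e_def by (rule mult_left_mono)
    moreover have "(1 - \<alpha> (Suc n)) * (Ky * e) \<le> Ky * e"
      using a1 Ky0 e0 by (simp add: mult_left_le_one_le)
    moreover have "Ky * e + U * a \<le> (Ky + U) * e + (Ky + U) * a"
      using Ky0 U0 e0 unfolding a_def by (intro add_mono mult_right_mono) auto
    ultimately show "norm (w i (Suc n) - w i n) \<le> (1 - \<alpha> (Suc n)) * norm (x (Suc n) - x n) + (Ky + U) * (e + a)"
      using norm_w_step_le[OF i n] unfolding a_def[symmetric] by (simp add: algebra_simps)
  qed
qed

lemma x_step_recursion:
  "\<exists>K. (\<forall>n. norm (x (Suc n) - x n) \<le> K)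
    \<and> (\<forall>n\<ge>1. norm (x (Suc (Suc n)) - x (Suc n)) \<le> (1 - \<alpha> (Suc n)) * norm (x (Suc n) - x n)
      + K * (\<theta> n + (lam n - lam (Suc n)) / lam (Suc n) + lam n * \<beta> n + \<bar>\<alpha> (Suc n) - \<alpha> n\<bar>))"
proof -
  obtain X where X0: "0 \<le> X" and X: "\<And>n. norm (x n) \<le> X"
    using x_bound by auto
  obtain Kw where Kw0: "0 \<le> Kw" and Kw: "\<And>i n. i \<in> {1..M} \<Longrightarrow> n \<ge> 1 \<Longrightarrow>
      norm (w i (Suc n) - w i n) \<le> (1 - \<alpha> (Suc n)) * norm (x (Suc n) - x n)
        + Kw * (\<theta> n + (lam n - lam (Suc n)) / lam (Suc n) + lam n * \<beta> n + \<bar>\<alpha> (Suc n) - \<alpha> n\<bar>)"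
    using norm_w_step_bound by auto
  define E where "E n = \<theta> n + (lam n - lam (Suc n)) / lam (Suc n) + lam n * \<beta> n + \<bar>\<alpha> (Suc n) - \<alpha> n\<bar>"
    for n
  have E0: "0 \<le> E n" for n
    using theta_rng[of n] lam_step[of n] lam_pos[of n] lam_pos[of "Suc n"] beta_rng[of n]
    by (simp add: E_def)
  show ?thesis
  proof (intro exI[of _ "2 * X + Kw"] conjI allI impI)
    show "norm (x (Suc n) - x n) \<le> 2 * X + Kw" for n
      using X[of "Suc n"] X[of n] norm_triangle_ineq4[of "x (Suc n)" "x n"] Kw0 by linarith
    fix n :: nat assume n: "n \<ge> 1"
    have "x (Suc (Suc n)) - x (Suc n) = (1 / real M) *\<^sub>R (\<Sum>i\<in>{1..M}. w i (Suc n) - w i n)"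
      using x_def[OF n] x_def[of "Suc n"] by (simp add: sum_subtractf scaleR_diff_right)
    then have "norm (x (Suc (Suc n)) - x (Suc n)) \<le> (1 - \<alpha> (Suc n)) * norm (x (Suc n) - x n) + Kw * E n"
      using norm_average_le[of "{1..M}" "\<lambda>i. w i (Suc n) - w i n"] Kw[OF _ n] M
      unfolding E_def by simp
    also have "Kw * E n \<le> (2 * X + Kw) * E n"
      using X0 E0[of n] by (intro mult_right_mono) auto
    finally show "norm (x (Suc (Suc n)) - x (Suc n)) \<le> (1 - \<alpha> (Suc n)) * norm (x (Suc n) - x n)
        + (2 * X + Kw) * (\<theta> n + (lam n - lam (Suc n)) / lam (Suc n) + lam n * \<beta> n + \<bar>\<alpha> (Suc n) - \<alpha> n\<bar>)"
      unfolding E_def by simp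
  qed
qed

theorem differences_tendsto_zero:
  "(\<lambda>n. norm (x (Suc n) - x n) / lam n) \<longlonglongrightarrow> 0 \<and> (\<lambda>n. norm (x (Suc n) - x n)) \<longlonglongrightarrow> 0"
proof -
  obtain K where bound: "\<And>n. norm (x (Suc n) - x n) \<le> K"
    and step: "\<And>n. n \<ge> 1 \<Longrightarrow> norm (x (Suc (Suc n)) - x (Suc n)) \<le> (1 - \<alpha> (Suc n)) * norm (x (Suc n) - x n)
      + K * (\<theta> n + (lam n - lam (Suc n)) / lam (Suc n) + lam n * \<beta> n + \<bar>\<alpha> (Suc n) - \<alpha> n\<bar>)"
    using x_step_recursion by auto
  have scaled: "(\<lambda>n. norm (x (Suc n) - x n) / lam n) \<longlonglongrightarrow> 0"
    by (rule normalized_recursion_tendsto_zero[where D = "\<lambda>n. norm (x (Suc n) - x n)" and K = K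
          and \<sigma> = \<sigma> and \<theta> = \<theta> and \<beta> = \<beta> and \<alpha> = \<alpha>])
      (simp_all add: bound step lam_pos dec(2) C6 theta_rng beta_rng alpha_rng less_imp_le C1 C2[simplified] C3[simplified] C5 C7)
  have "(\<lambda>n. norm (x (Suc n) - x n) / lam n * lam n) \<longlonglongrightarrow> 0 * 0"
    by (intro tendsto_mult scaled lim0(1))
  moreover have "norm (x (Suc n) - x n) / lam n * lam n = norm (x (Suc n) - x n)" for n
    using lam_pos[of n] by simp
  ultimately show ?thesis
    using scaled by simp
qed

lemma y_dist_sq_le:
  assumes i: "i \<in> {1..M}" and n: "n \<ge> 1"
  shows "(norm (y i n - v))\<^sup>2 \<le> (norm (z n - v))\<^sup>2 - (norm (z n - y i n))\<^sup>2
    + 2 * lam n * (f i v - f i (y i n)) + 2 * lam n * inner (d i (Suc n)) (y i n - v)"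
proof -
  define A where "A = z n - v"
  define B where "B = z n - y i n"
  have "y i n - v = A - B" and "v - y i n = B - A"
    by (simp_all add: A_def B_def)
  then have "(norm (y i n - v))\<^sup>2
      = (norm (z n - v))\<^sup>2 - (norm (z n - y i n))\<^sup>2 + 2 * inner (z n - y i n) (v - y i n)"
    unfolding A_def[symmetric] B_def[symmetric] power2_norm_eq_inner
    by (simp add: inner_diff_left inner_diff_right inner_commute)
  moreover have "inner (prox_arg i n - y i n) (v - y i n) \<le> lam n * (f i v - f i (y i n))"
    by (rule prox_variational_ineq[OF A1_cont[OF i] A1_conv[OF i] lam_pos y_eq_prox[OF i n]])
  moreover have "inner (prox_arg i n - y i n) (v - y i n)
      = inner (z n - y i n) (v - y i n) - lam n * inner (d i (Suc n)) (y i n - v)"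
    unfolding prox_arg_def by (simp add: inner_diff_left inner_diff_right inner_add_left algebra_simps)
  ultimately show ?thesis
    by linarith
qed

lemma z_dist_sq_le:
  "\<exists>D\<ge>0. \<forall>n\<ge>1. (norm (z n - v))\<^sup>2 \<le> (norm (x n - v))\<^sup>2 + \<theta> n * D"
proof -
  obtain X where X0: "0 \<le> X" and X: "\<And>n. norm (x n) \<le> X"
    using x_bound by auto
  define D where "D = 2 * (X + norm v) * (2 * X) + (2 * X)\<^sup>2"
  have "(norm (z n - v))\<^sup>2 \<le> (norm (x n - v))\<^sup>2 + \<theta> n * D" if n: "n \<ge> 1" for n
  proof -
    define e where "e = x n - x (n - 1)"
    have zv: "z n - v = (x n - v) + \<theta> n *\<^sub>R e"
      unfolding z_def[OF n] e_def by simp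
    have "(norm (z n - v))\<^sup>2
        \<le> (norm (x n - v))\<^sup>2 + \<theta> n * (2 * norm (x n - v) * norm e + (norm e)\<^sup>2)"
      unfolding zv using theta_rng[of n] by (intro norm_add_scaled_sq_le) auto
    moreover have "2 * norm (x n - v) * norm e + (norm e)\<^sup>2 \<le> D"
    proof -
      have "norm (x n - v) \<le> X + norm v" and e: "norm e \<le> 2 * X"
        using X[of n] X[of "n - 1"] norm_triangle_ineq4[of "x n" v] norm_triangle_ineq4[of "x n" "x (n - 1)"]
        unfolding e_def by linarith+
      then have "2 * norm (x n - v) * norm e \<le> 2 * (X + norm v) * (2 * X)"
        using X0 by (intro mult_mono) auto
      moreover have "(norm e)\<^sup>2 \<le> (2 * X)\<^sup>2"
        using e by (intro power_mono) auto
      ultimately show ?thesis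
        unfolding D_def by linarith
    qed
    ultimately show ?thesis
      using theta_rng[of n] mult_left_mono by fastforce
  qed
  moreover have "0 \<le> D"
    using X0 by (simp add: D_def)
  ultimately show ?thesis
    by blast
qed

theorem w_dist_sq_le:
  assumes i: "i \<in> {1..M}" and fixed: "T i v = v"
  shows "\<exists>D1 D2. D1 \<ge> 0 \<and> D2 \<ge> 0 \<and>
    (\<forall>n\<ge>1. (norm (w i n - v))\<^sup>2 \<le> (norm (x n - v))\<^sup>2 + \<theta> n * D1
      + 2 * lam n * (f i v - f i (y i n)) + 2 * lam n * inner (d i (Suc n)) (y i n - v)
      + \<alpha> n * D2 - (1 - \<alpha> n) * (norm (T i (y i n) - y i n))\<^sup>2 - (norm (z n - y i n))\<^sup>2)"
proof -
  obtain D1 where "0 \<le> D1" and D1: "\<And>n. n \<ge> 1 \<Longrightarrow> (norm (z n - v))\<^sup>2 \<le> (norm (x n - v))\<^sup>2 + \<theta> n * D1"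
    using z_dist_sq_le by auto
  have "(norm (w i n - v))\<^sup>2 \<le> (norm (x n - v))\<^sup>2 + \<theta> n * D1
      + 2 * lam n * (f i v - f i (y i n)) + 2 * lam n * inner (d i (Suc n)) (y i n - v)
      + \<alpha> n * (norm (u i - v))\<^sup>2 - (1 - \<alpha> n) * (norm (T i (y i n) - y i n))\<^sup>2 - (norm (z n - y i n))\<^sup>2"
    if n: "n \<ge> 1" for n
  proof -
    have \<alpha>: "0 \<le> \<alpha> n" "\<alpha> n \<le> 1"
      using alpha_rng[of n] by auto
    have "w i n - v = \<alpha> n *\<^sub>R (u i - v) + (1 - \<alpha> n) *\<^sub>R (T i (y i n) - v)"
      unfolding w_def[OF i n] by (simp add: algebra_simps)
    then have "(norm (w i n - v))\<^sup>2 \<le> \<alpha> n * (norm (u i - v))\<^sup>2 + (1 - \<alpha> n) * (norm (T i (y i n) - v))\<^sup>2"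
      using norm_convex_combination_sq_le[OF \<alpha>] by simp
    also have "(1 - \<alpha> n) * (norm (T i (y i n) - v))\<^sup>2
        \<le> (1 - \<alpha> n) * ((norm (y i n - v))\<^sup>2 - (norm (T i (y i n) - y i n))\<^sup>2)"
      using firmly_nonexpansive_fixed_point_ineq[OF A3[OF i] fixed] \<alpha> by (intro mult_left_mono) auto
    also have "\<dots> \<le> (norm (y i n - v))\<^sup>2 - (1 - \<alpha> n) * (norm (T i (y i n) - y i n))\<^sup>2"
      using \<alpha> by (simp add: algebra_simps)
    finally show ?thesis
      using y_dist_sq_le[OF i n, of v] D1[OF n] by simp
  qed
  then show ?thesis
    using \<open>0 \<le> D1\<close> by (intro exI[of _ D1] exI[of _ "(norm (u i - v))\<^sup>2"]) auto
qed

end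

theorem lemma6:
  fixes M :: nat
    and f h :: "nat \<Rightarrow> 'a::{real_inner, complete_space} \<Rightarrow> real"
    and gradh :: "nat \<Rightarrow> 'a \<Rightarrow> 'a"
    and L :: "nat \<Rightarrow> real"
    and T :: "nat \<Rightarrow> 'a \<Rightarrow> 'a"
    and S :: "'a set"
    and \<psi> :: "'a \<Rightarrow> real"
    and \<theta> lam \<beta> \<alpha> :: "nat \<Rightarrow> real"
    and \<sigma> :: real
    and u :: "nat \<Rightarrow> 'a"
    and x z :: "nat \<Rightarrow> 'a"
    and d y w :: "nat \<Rightarrow> nat \<Rightarrow> 'a"
  assumes M: "M \<ge> 1"
    \<comment> \<open>(A1)\<close>
    and A1_cont: "\<And>i. i \<in> {1..M} \<Longrightarrow> continuous_on UNIV (f i)"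
    and A1_conv: "\<And>i. i \<in> {1..M} \<Longrightarrow> convex_on UNIV (f i)"
    \<comment> \<open>(A2): gradh i is the gradient of h i, (1 / L i)-Lipschitz\<close>
    and A2_conv: "\<And>i. i \<in> {1..M} \<Longrightarrow> convex_on UNIV (h i)"
    and A2_grad: "\<And>i v. i \<in> {1..M} \<Longrightarrow>
                    (h i has_derivative (\<lambda>e. inner (gradh i v) e)) (at v)"
    and A2_L: "\<And>i. i \<in> {1..M} \<Longrightarrow> L i > 0"
    and A2_lip: "\<And>i v v'. i \<in> {1..M} \<Longrightarrow>
                    norm (gradh i v - gradh i v') \<le> (1 / L i) * norm (v - v')"
    \<comment> \<open>(A3)\<close>
    and A3: "\<And>i. i \<in> {1..M} \<Longrightarrow> firmly_nonexpansive (T i)"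
    \<comment> \<open>(A4)\<close>
    and S_def: "S = {v. \<forall>i\<in>{1..M}. T i v = v}"
    and S_ne: "S \<noteq> {}"
    and psi_def: "\<psi> = (\<lambda>v. \<Sum>i\<in>{1..M}. f i v + h i v)"
    and Omega_ne: "{xh \<in> S. \<forall>v\<in>S. \<psi> xh \<le> \<psi> v} \<noteq> {}"
    \<comment> \<open>Condition (C)\<close>
    and dec: "decseq \<theta>" "decseq lam" "decseq \<beta>" "decseq \<alpha>"
    and lim0: "\<theta> \<longlonglongrightarrow> 0" "lam \<longlonglongrightarrow> 0" "\<beta> \<longlonglongrightarrow> 0" "\<alpha> \<longlonglongrightarrow> 0"
    and theta_rng: "\<And>n. 0 \<le> \<theta> n \<and> \<theta> n < 1"
    and lam_rng: "\<And>n. 0 < lam n \<and> lam n \<le> 2 * Min (L ` {1..M})"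
    and beta_rng: "\<And>n. 0 < \<beta> n \<and> \<beta> n \<le> 1"
    and alpha_rng: "\<And>n. 0 < \<alpha> n \<and> \<alpha> n \<le> 1"
    and C1: "filterlim (\<lambda>n. \<Sum>k\<le>n. \<alpha> k) at_top sequentially"
    and C2: "(\<lambda>n. (1 / \<alpha> (Suc n)) * \<bar>1 / lam (Suc n) - 1 / lam n\<bar>) \<longlonglongrightarrow> 0"
    and C3: "(\<lambda>n. (1 / lam (Suc n)) * \<bar>1 - \<alpha> n / \<alpha> (Suc n)\<bar>) \<longlonglongrightarrow> 0"
    and C4: "(\<lambda>n. \<alpha> n / lam n) \<longlonglongrightarrow> 0"
    and C5: "(\<lambda>n. \<theta> n / (\<alpha> (Suc n) * lam (Suc n))) \<longlonglongrightarrow> 0"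
    and C6: "\<sigma> \<ge> 1" "\<And>n. lam n / lam (Suc n) \<le> \<sigma>"
    and C7: "(\<lambda>n. \<beta> n / \<alpha> (Suc n)) \<longlonglongrightarrow> 0"
    \<comment> \<open>The algorithm (z 0, x 0, x 1, u i arbitrary); w i n stands for w^{(i+1)}_n\<close>
    and d1: "\<And>i. i \<in> {1..M} \<Longrightarrow> d i 1 = - gradh i (z 0)"
    and z_def: "\<And>n. n \<ge> 1 \<Longrightarrow> z n = x n + \<theta> n *\<^sub>R (x n - x (n - 1))"
    and d_def: "\<And>i n. i \<in> {1..M} \<Longrightarrow> n \<ge> 1 \<Longrightarrow>
                  d i (Suc n) = - gradh i (z n) + \<beta> n *\<^sub>R d i n"
    and y_def: "\<And>i n. i \<in> {1..M} \<Longrightarrow> n \<ge> 1 \<Longrightarrow>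
                  y i n = prox (lam n) (f i) (z n + lam n *\<^sub>R d i (Suc n))"
    and w_def: "\<And>i n. i \<in> {1..M} \<Longrightarrow> n \<ge> 1 \<Longrightarrow>
                  w i n = \<alpha> n *\<^sub>R u i + (1 - \<alpha> n) *\<^sub>R T i (y i n)"
    and x_def: "\<And>n. n \<ge> 1 \<Longrightarrow>
                  x (Suc n) = (1 / real M) *\<^sub>R (\<Sum>i\<in>{1..M}. w i n)"
    \<comment> \<open>boundedness of the y-sequences\<close>
    and y_bdd: "\<And>i. i \<in> {1..M} \<Longrightarrow> bounded (y i ` {1..})"
  shows "(\<lambda>n. norm (x (Suc n) - x n) / lam n) \<longlonglongrightarrow> 0
       \<and> (\<lambda>n. norm (x (Suc n) - x n)) \<longlonglongrightarrow> 0
       \<and> (\<forall>xb\<in>S. \<forall>i\<in>{1..M}. \<exists>D1 D2. D1 \<ge> 0 \<and> D2 \<ge> 0 \<and>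
            (\<forall>n\<ge>1. (norm (w i n - xb))\<^sup>2
               \<le> (norm (x n - xb))\<^sup>2 + \<theta> n * D1
                 + 2 * lam n * (f i xb - f i (y i n))
                 + 2 * lam n * inner (d i (Suc n)) (y i n - xb)
                 + \<alpha> n * D2
                 - (1 - \<alpha> n) * (norm (T i (y i n) - y i n))\<^sup>2
                 - (norm (z n - y i n))\<^sup>2))"
proof -
  interpret distributed_accelerated_parallel M f h gradh L T \<theta> lam \<beta> \<alpha> \<sigma> u x z d y w
    by unfold_locales (fact assms)+
  have fixed: "T i xb = xb" if "xb \<in> S" and "i \<in> {1..M}" for xb i
    using that by (simp add: S_def)
  show ?thesis
    using differences_tendsto_zero w_dist_sq_le[OF _ fixed] by blast
qed

end
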